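(* Let $\mathcal F\subset\mathcal G\subset 2^{[n]}$, where $\mathcal G$ is a down-set and $\mathcal F$ is intersecting. If $\tau(\mathcal F)\le 2$, then $$|\mathcal F|\le \max_{x\in[n]}\big|\{G\in\mathcal G: x\in G\}\big|.$$
   Context: $[n]=\{1,\dots,n\}$. A family $\mathcal G\subset 2^{[n]}$ is a down-set if $B\in\mathcal G$ and $A\subset B$ imply $A\in\mathcal G$. A family $\mathcal F$ is intersecting if $A\cap B\ne\emptyset$ for all $A,B\in\mathcal F$. For a family $\mathcal F$ of non-empty sets, the covering number $\tau(\mathcal F)$ is the minimal integer $t$ such that there is a $t$-element set $T$ with $T\cap F\neq\emptyset$ for all $F\in\mathcal F$. *)

theory Defs
  imports Main
begin

definition down_set :: "nat set set \<Rightarrow> bool" where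
  "down_set G \<longleftrightarrow> (\<forall>B\<in>G. \<forall>A. A \<subseteq> B \<longrightarrow> A \<in> G)"

definition intersecting :: "nat set set \<Rightarrow> bool" where
  "intersecting F \<longleftrightarrow> (\<forall>A\<in>F. \<forall>B\<in>F. A \<inter> B \<noteq> {})"

definition covering_number :: "nat set set \<Rightarrow> nat" where
  "covering_number F = (LEAST t. \<exists>T. finite T \<and> card T = t \<and> (\<forall>X\<in>F. T \<inter> X \<noteq> {}))"

end

theory Submission
  imports Defs
begin

text \<open>
  Let \<open>{x, y}\<close> cover \<open>F\<close> and let \<open>Y\<close> be the rest of the ground set. Sorting sets by their
  trace on \<open>{x, y}\<close>, \<open>F\<close> splits into parts \<open>P\<close>, \<open>Q\<close>, \<open>R\<close> (traces \<open>{x}\<close>, \<open>{y}\<close>, \<open>{x, y}\<close>),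
  and \<open>G\<close> yields down-sets \<open>D\<^sub>x\<close>, \<open>D\<^sub>y\<close>, \<open>E\<close> on \<open>Y\<close> with \<open>deg x = |D\<^sub>x| + |E|\<close> and
  \<open>deg y = |D\<^sub>y| + |E|\<close>. Clearly \<open>|R| \<le> |E|\<close>. The parts \<open>P \<subseteq> D\<^sub>x\<close> and \<open>Q \<subseteq> D\<^sub>y\<close> (with
  \<open>x\<close>, \<open>y\<close> deleted) are cross-intersecting, and Kleitman's correlation inequality for
  down-sets and up-sets gives \<open>|P| + |Q| \<le> max |D\<^sub>x| |D\<^sub>y|\<close>. Hence \<open>|F| \<le> max (deg x) (deg y)\<close>.
\<close>

definition down_closed :: "'a set set \<Rightarrow> bool" where
  "down_closed D \<longleftrightarrow> (\<forall>S\<in>D. \<forall>T. T \<subseteq> S \<longrightarrow> T \<in> D)"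

definition up_closed_in :: "'a set \<Rightarrow> 'a set set \<Rightarrow> bool" where
  "up_closed_in Y U \<longleftrightarrow> U \<subseteq> Pow Y \<and> (\<forall>S\<in>U. \<forall>T. S \<subseteq> T \<longrightarrow> T \<subseteq> Y \<longrightarrow> T \<in> U)"

definition cross_intersecting :: "'a set set \<Rightarrow> 'a set set \<Rightarrow> bool" where
  "cross_intersecting P Q \<longleftrightarrow> (\<forall>A\<in>P. \<forall>B\<in>Q. A \<inter> B \<noteq> {})"

definition slice :: "'a set set \<Rightarrow> 'a set \<Rightarrow> 'a set \<Rightarrow> 'a set set" where
  "slice X I Y = {S \<in> Pow Y. S \<union> I \<in> X}"

lemma down_closedI: "(\<And>S T. S \<in> D \<Longrightarrow> T \<subseteq> S \<Longrightarrow> T \<in> D) \<Longrightarrow> down_closed D"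
  by (auto simp: down_closed_def)

lemma down_closedD: "down_closed D \<Longrightarrow> S \<in> D \<Longrightarrow> T \<subseteq> S \<Longrightarrow> T \<in> D"
  by (auto simp: down_closed_def)

lemma up_closed_inI:
  "U \<subseteq> Pow Y \<Longrightarrow> (\<And>S T. S \<in> U \<Longrightarrow> S \<subseteq> T \<Longrightarrow> T \<subseteq> Y \<Longrightarrow> T \<in> U) \<Longrightarrow> up_closed_in Y U"
  by (auto simp: up_closed_in_def)

lemma up_closed_inD: "up_closed_in Y U \<Longrightarrow> S \<in> U \<Longrightarrow> S \<subseteq> T \<Longrightarrow> T \<subseteq> Y \<Longrightarrow> T \<in> U"
  by (auto simp: up_closed_in_def)

lemma up_closed_in_subset_Pow: "up_closed_in Y U \<Longrightarrow> U \<subseteq> Pow Y"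
  by (simp add: up_closed_in_def)

lemma slice_subset_Pow: "slice X I Y \<subseteq> Pow Y"
  by (auto simp: slice_def)

lemma slice_mono: "X \<subseteq> X' \<Longrightarrow> slice X I Y \<subseteq> slice X' I Y"
  by (auto simp: slice_def)

lemma slice_Int: "slice (X \<inter> X') I Y = slice X I Y \<inter> slice X' I Y"
  by (auto simp: slice_def)

lemma down_closed_slice:
  assumes "down_closed X"
  shows "down_closed (slice X I Y)"
proof (rule down_closedI)
  fix S T
  assume "S \<in> slice X I Y" "T \<subseteq> S"
  then have "S \<union> I \<in> X" "T \<union> I \<subseteq> S \<union> I" "T \<subseteq> Y"
    by (auto simp: slice_def)
  then show "T \<in> slice X I Y"
    unfolding slice_def by (blast intro: down_closedD[OF assms])
qed

lemma up_closed_in_slice: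
  assumes "up_closed_in Z U" "Y \<union> I \<subseteq> Z"
  shows "up_closed_in Y (slice U I Y)"
proof (rule up_closed_inI)
  fix S T
  assume "S \<in> slice U I Y" "S \<subseteq> T" "T \<subseteq> Y"
  then have "S \<union> I \<in> U" "S \<union> I \<subseteq> T \<union> I" "T \<union> I \<subseteq> Z" "T \<subseteq> Y"
    using assms(2) by (auto simp: slice_def)
  then show "T \<in> slice U I Y"
    unfolding slice_def by (blast intro: up_closed_inD[OF assms(1)])
qed (rule slice_subset_Pow)

lemma slice_antimono_down_closed:
  assumes "down_closed X" "I \<subseteq> J"
  shows "slice X J Y \<subseteq> slice X I Y"
proof
  fix S
  assume "S \<in> slice X J Y"
  moreover have "S \<union> I \<subseteq> S \<union> J"
    using assms(2) by blast
  ultimately show "S \<in> slice X I Y"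
    unfolding slice_def by (blast intro: down_closedD[OF assms(1)])
qed

lemma slice_mono_up_closed:
  assumes "up_closed_in Z U" "Y \<union> J \<subseteq> Z" "I \<subseteq> J"
  shows "slice U I Y \<subseteq> slice U J Y"
proof
  fix S
  assume "S \<in> slice U I Y"
  moreover have "S \<union> I \<subseteq> S \<union> J" "S \<union> J \<subseteq> Z" if "S \<subseteq> Y"
    using assms(2,3) that by blast+
  ultimately show "S \<in> slice U J Y"
    unfolding slice_def by (blast intro: up_closed_inD[OF assms(1)])
qed

lemma cross_intersecting_slice:
  assumes "cross_intersecting F F'" "Y \<inter> (I \<union> J) = {}" "I \<inter> J = {}"
  shows "cross_intersecting (slice F I Y) (slice F' J Y)"
proof -
  have "S \<inter> T \<noteq> {}" if "S \<in> slice F I Y" "T \<in> slice F' J Y" for S T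
  proof -
    have "(S \<union> I) \<inter> (T \<union> J) \<noteq> {}"
      using assms(1) that by (simp add: cross_intersecting_def slice_def)
    moreover have "(S \<union> I) \<inter> (T \<union> J) = S \<inter> T"
      using that assms(2,3) by (auto simp: slice_def)
    ultimately show ?thesis
      by simp
  qed
  then show ?thesis
    by (simp add: cross_intersecting_def)
qed

lemma card_slice:
  assumes "Y \<inter> Z = {}" "I \<subseteq> Z" "X \<subseteq> Pow (Y \<union> Z)"
  shows "card (slice X I Y) = card {A \<in> X. A \<inter> Z = I}"
proof (rule bij_betw_same_card)
  have recombine: "A \<inter> Y \<union> A \<inter> Z = A" if "A \<in> X" for A
    using that assms(3) by blast
  show "bij_betw (\<lambda>S. S \<union> I) (slice X I Y) {A \<in> X. A \<inter> Z = I}"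
    by (rule bij_betw_byWitness[where f' = "\<lambda>A. A \<inter> Y"])
      (use assms recombine in \<open>auto simp: slice_def\<close>)
qed

lemma card_eq_sum_slices:
  assumes "finite Y" "finite Z" "Y \<inter> Z = {}" "X \<subseteq> Pow (Y \<union> Z)"
  shows "card X = (\<Sum>I\<in>Pow Z. card (slice X I Y))"
proof -
  have "finite (Pow (Y \<union> Z))"
    using assms(1,2) by simp
  with assms(4) have "finite X"
    by (rule finite_subset)
  have "X = (\<Union>I\<in>Pow Z. {A \<in> X. A \<inter> Z = I})"
  proof (rule set_eqI, rule iffI)
    fix A
    assume "A \<in> X"
    then show "A \<in> (\<Union>I\<in>Pow Z. {A \<in> X. A \<inter> Z = I})"
      by (intro UN_I[of "A \<inter> Z"]) auto
  qed blast
  also have "card \<dots> = (\<Sum>I\<in>Pow Z. card {A \<in> X. A \<inter> Z = I})"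
    by (rule card_UN_disjoint) (use assms \<open>finite X\<close> in auto)
  also have "\<dots> = (\<Sum>I\<in>Pow Z. card (slice X I Y))"
    using assms by (simp add: card_slice)
  finally show ?thesis .
qed

lemma card_eq_sum_two_slices:
  assumes "finite Y" "a \<notin> Y" "X \<subseteq> Pow (insert a Y)"
  shows "card X = card (slice X {} Y) + card (slice X {a} Y)"
proof -
  have "Pow {a} = {{}, {a}}"
    by (simp add: Pow_insert insert_commute)
  then show ?thesis
    using card_eq_sum_slices[of Y "{a}" X] assms by simp
qed

lemma two_term_Chebyshev:
  fixes d0 d1 u0 u1 :: nat
  assumes "d1 \<le> d0" "u0 \<le> u1"
  shows "2 * (d0 * u0 + d1 * u1) \<le> (d0 + d1) * (u0 + u1)"
proof -
  obtain p where "d0 = d1 + p"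
    using assms(1) le_Suc_ex by blast
  moreover obtain q where "u1 = u0 + q"
    using assms(2) le_Suc_ex by blast
  ultimately show ?thesis
    by (simp add: algebra_simps)
qed

theorem Kleitman_down_up:
  assumes "finite Y" "D \<subseteq> Pow Y" "down_closed D" "up_closed_in Y U"
  shows "2 ^ card Y * card (D \<inter> U) \<le> card D * card U"
  using assms
proof (induction Y arbitrary: D U rule: finite_induct)
  case empty
  then have "D \<subseteq> {{}}" "U \<subseteq> {{}}"
    by (auto dest: up_closed_in_subset_Pow)
  then show ?case
    by (auto simp: subset_singleton_iff)
next
  case (insert a Y)
  define D0 where "D0 = slice D {} Y"
  define D1 where "D1 = slice D {a} Y"
  define U0 where "U0 = slice U {} Y"
  define U1 where "U1 = slice U {a} Y"
  have U: "U \<subseteq> Pow (insert a Y)"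
    using insert.prems(3) by (rule up_closed_in_subset_Pow)
  have slices_finite: "finite (slice X I Y)" for X I
    using insert.hyps(1) by (intro finite_subset[OF slice_subset_Pow]) simp
  have IH0: "2 ^ card Y * card (D0 \<inter> U0) \<le> card D0 * card U0"
    unfolding D0_def U0_def
    by (intro insert.IH slice_subset_Pow down_closed_slice insert.prems(2)
        up_closed_in_slice[OF insert.prems(3)]) auto
  have IH1: "2 ^ card Y * card (D1 \<inter> U1) \<le> card D1 * card U1"
    unfolding D1_def U1_def
    by (intro insert.IH slice_subset_Pow down_closed_slice insert.prems(2)
        up_closed_in_slice[OF insert.prems(3)]) auto
  have D1_le: "card D1 \<le> card D0"
    unfolding D0_def D1_def
    by (intro card_mono slices_finite slice_antimono_down_closed insert.prems(2)) simp
  have U0_le: "card U0 \<le> card U1"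
    unfolding U0_def U1_def
    by (intro card_mono slices_finite slice_mono_up_closed[OF insert.prems(3)]) auto
  have split: "card D = card D0 + card D1" "card U = card U0 + card U1"
    "card (D \<inter> U) = card (D0 \<inter> U0) + card (D1 \<inter> U1)"
    unfolding D0_def D1_def U0_def U1_def slice_Int[symmetric]
    using insert.hyps insert.prems(1) U by (auto intro!: card_eq_sum_two_slices)
  have "2 ^ card (insert a Y) * card (D \<inter> U)
      = 2 * (2 ^ card Y * card (D0 \<inter> U0) + 2 ^ card Y * card (D1 \<inter> U1))"
    using insert.hyps split(3) by (simp add: algebra_simps)
  also have "\<dots> \<le> 2 * (card D0 * card U0 + card D1 * card U1)"
    using IH0 IH1 by simp
  also have "\<dots> \<le> (card D0 + card D1) * (card U0 + card U1)"
    using D1_le U0_le by (rule two_term_Chebyshev)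
  also have "\<dots> = card D * card U"
    using split by simp
  finally show ?case .
qed

lemma up_closed_in_Pow_diff:
  assumes "down_closed V"
  shows "up_closed_in Y (Pow Y - V)"
proof (rule up_closed_inI)
  fix S T
  assume "S \<in> Pow Y - V" "S \<subseteq> T" "T \<subseteq> Y"
  then show "T \<in> Pow Y - V"
    using down_closedD[OF assms] by blast
qed blast

lemma down_closed_complements:
  assumes "up_closed_in Y U"
  shows "down_closed ((\<lambda>T. Y - T) ` U)"
proof (rule down_closedI)
  fix S T
  assume "S \<in> (\<lambda>T. Y - T) ` U" "T \<subseteq> S"
  then obtain S' where S': "S' \<in> U" "S = Y - S'"
    by blast
  have "S' \<subseteq> Y - T"
    using S' \<open>T \<subseteq> S\<close> up_closed_in_subset_Pow[OF assms] by auto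
  then have "Y - T \<in> U"
    using up_closed_inD[OF assms S'(1)] by blast
  moreover have "T = Y - (Y - T)"
    using S'(2) \<open>T \<subseteq> S\<close> by blast
  ultimately show "T \<in> (\<lambda>T. Y - T) ` U"
    by blast
qed

lemma card_complements:
  assumes "U \<subseteq> Pow Y"
  shows "card ((\<lambda>T. Y - T) ` U) = card U"
proof (rule card_image, rule inj_onI)
  fix S T
  assume "S \<in> U" "T \<in> U" "Y - S = Y - T"
  then have "Y - (Y - S) = Y - (Y - T)" "S \<subseteq> Y" "T \<subseteq> Y"
    using assms by auto
  then show "S = T"
    by (simp add: Diff_Diff_Int Int_absorb1)
qed

corollary Kleitman_down_down:
  assumes "finite Y" "D \<subseteq> Pow Y" "down_closed D" "V \<subseteq> Pow Y" "down_closed V"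
  shows "card D * card V \<le> 2 ^ card Y * card (D \<inter> V)"
proof -
  have "D \<inter> (Pow Y - V) = D - V"
    using assms(2) by blast
  then have "2 ^ card Y * card (D - V) \<le> card D * card (Pow Y - V)"
    using Kleitman_down_up[OF assms(1-3) up_closed_in_Pow_diff[OF assms(5)]] by simp
  moreover have "card D = card (D - V) + card (D \<inter> V)"
    using finite_subset[OF assms(2)] assms(1) card_Int_Diff[of D V] by simp
  moreover have "2 ^ card Y = card (Pow Y - V) + card V"
    using assms(1,4) card_Pow[of Y] card_Int_Diff[of "Pow Y" V] by (simp add: Int_absorb1)
  ultimately show ?thesis
    by (simp add: algebra_simps)
qed

theorem card_cross_intersecting_le:
  assumes "finite Y" "D1 \<subseteq> Pow Y" "D2 \<subseteq> Pow Y" "down_closed D1" "down_closed D2"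
    and "card D1 \<le> card D2" "P \<subseteq> D1" "Q \<subseteq> D2" "cross_intersecting P Q"
  shows "card P + card Q \<le> card D2"
proof -
  \<comment> \<open>The complements \<open>V\<close> of the up-closure \<open>U\<close> of \<open>P\<close> avoid \<open>Q\<close>; Kleitman's inequality,
    applied once to \<open>D1, U\<close> and once to \<open>D2, V\<close>, transfers \<open>|P| \<le> |D1 \<inter> U|\<close> to \<open>|D2 \<inter> V|\<close>.\<close>
  define U where "U = {T \<in> Pow Y. \<exists>S\<in>P. S \<subseteq> T}"
  define V where "V = (\<lambda>T. Y - T) ` U"
  have U: "up_closed_in Y U"
    unfolding U_def by (rule up_closed_inI) blast+
  have V: "V \<subseteq> Pow Y" "down_closed V" "card V = card U"
    unfolding V_def
    using down_closed_complements[OF U] card_complements[OF up_closed_in_subset_Pow[OF U]]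
    by auto
  have "Q \<inter> V = {}"
    using assms(9) unfolding V_def U_def cross_intersecting_def by blast
  have "P \<subseteq> D1 \<inter> U"
    using assms(2,7) unfolding U_def by blast
  have finite_D: "finite D1" "finite D2"
    using finite_subset[OF assms(2)] finite_subset[OF assms(3)] assms(1) by simp_all
  have "2 ^ card Y * card P \<le> 2 ^ card Y * card (D1 \<inter> U)"
    using finite_D \<open>P \<subseteq> D1 \<inter> U\<close> by (simp add: card_mono)
  also have "\<dots> \<le> card D1 * card U"
    using Kleitman_down_up[OF assms(1,2,4) U] .
  also have "\<dots> \<le> card D2 * card V"
    using assms(6) V(3) by simp
  also have "\<dots> \<le> 2 ^ card Y * card (D2 \<inter> V)"
    using Kleitman_down_down[OF assms(1,3,5) V(1,2)] .
  finally have "card P \<le> card (D2 \<inter> V)"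
    by simp
  moreover have "card Q + card (D2 \<inter> V) \<le> card D2"
  proof -
    have "card Q + card (D2 \<inter> V) = card (Q \<union> (D2 \<inter> V))"
      using finite_subset[OF assms(8) finite_D(2)] finite_D \<open>Q \<inter> V = {}\<close>
      by (intro card_Un_disjoint[symmetric]) auto
    also have "\<dots> \<le> card D2"
      using finite_D assms(8) by (intro card_mono) auto
    finally show ?thesis .
  qed
  ultimately show ?thesis
    by simp
qed

lemma sum_Pow_doubleton:
  assumes "x \<noteq> y"
  shows "(\<Sum>I\<in>Pow {x, y}. f I) = f {} + f {x} + f {y} + f {x, y}"
proof -
  have "Pow {x, y} = {{}, {x}, {y}, {x, y}}"
    by (simp add: Pow_insert insert_commute)
  then show ?thesis
    using assms by (simp add: doubleton_eq_iff add.assoc)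
qed

theorem card_le_degree_if_two_point_cover:
  assumes "finite Y" "x \<notin> Y" "y \<notin> Y" "x \<noteq> y"
    and "G \<subseteq> Pow (Y \<union> {x, y})" "down_closed G"
    and "F \<subseteq> G" "cross_intersecting F F" "\<forall>A\<in>F. A \<inter> {x, y} \<noteq> {}"
    and "card (slice G {x} Y) \<le> card (slice G {y} Y)"
  shows "card F \<le> card {A \<in> G. y \<in> A}"
proof -
  have Y: "Y \<inter> {x, y} = {}"
    using assms(2,3) by blast
  have "slice F {} Y = {}"
    using assms(9) Y by (auto simp: slice_def)
  moreover have "card F = (\<Sum>I\<in>Pow {x, y}. card (slice F I Y))"
    using assms(5,7) by (intro card_eq_sum_slices[OF assms(1) _ Y]) auto
  ultimately have card_F:
    "card F = card (slice F {x} Y) + card (slice F {y} Y) + card (slice F {x, y} Y)"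
    by (simp add: sum_Pow_doubleton[OF assms(4)])
  have "slice {A \<in> G. y \<in> A} I Y = (if y \<in> I then slice G I Y else {})" for I
    using assms(3) by (auto simp: slice_def)
  moreover have "card {A \<in> G. y \<in> A} = (\<Sum>I\<in>Pow {x, y}. card (slice {A \<in> G. y \<in> A} I Y))"
    using assms(5) by (intro card_eq_sum_slices[OF assms(1) _ Y]) auto
  ultimately have card_star:
    "card {A \<in> G. y \<in> A} = card (slice G {y} Y) + card (slice G {x, y} Y)"
    using assms(4) by (simp add: sum_Pow_doubleton[OF assms(4)])
  have finite_slice: "finite (slice X I Y)" for X I
    using assms(1) by (intro finite_subset[OF slice_subset_Pow]) simp
  have "card (slice F {x} Y) + card (slice F {y} Y) \<le> card (slice G {y} Y)"
  proof (rule card_cross_intersecting_le[OF assms(1) slice_subset_Pow slice_subset_Pow])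
    show "down_closed (slice G {x} Y)" "down_closed (slice G {y} Y)"
      using assms(6) by (rule down_closed_slice)+
    show "slice F {x} Y \<subseteq> slice G {x} Y" "slice F {y} Y \<subseteq> slice G {y} Y"
      using assms(7) by (rule slice_mono)+
    show "cross_intersecting (slice F {x} Y) (slice F {y} Y)"
      using cross_intersecting_slice[OF assms(8)] Y assms(4) by auto
  qed (fact assms(10))
  moreover have "card (slice F {x, y} Y) \<le> card (slice G {x, y} Y)"
    by (intro card_mono finite_slice slice_mono assms(7))
  ultimately show ?thesis
    using card_F card_star by linarith
qed

lemma card_le_Max_degree:
  assumes "finite N" "G \<subseteq> Pow N" "card F \<le> card {A \<in> G. z \<in> A}"
  shows "card F \<le> Max ((\<lambda>x. card {A \<in> G. x \<in> A}) ` N)"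
proof (cases "z \<in> N")
  case True
  then have "card {A \<in> G. z \<in> A} \<le> Max ((\<lambda>x. card {A \<in> G. x \<in> A}) ` N)"
    using assms(1) by (intro Max_ge) auto
  then show ?thesis
    using assms(3) by linarith
next
  case False
  then have "{A \<in> G. z \<in> A} = {}"
    using assms(2) by blast
  then show ?thesis
    using assms(3) unfolding \<open>{A \<in> G. z \<in> A} = {}\<close> by simp
qed

lemma covering_number_attained:
  assumes "finite T0" "\<forall>X\<in>F. T0 \<inter> X \<noteq> {}"
  obtains T where "finite T" "card T = covering_number F" "\<forall>X\<in>F. T \<inter> X \<noteq> {}"
proof -
  have "\<exists>t T. finite T \<and> card T = t \<and> (\<forall>X\<in>F. T \<inter> X \<noteq> {})"
    using assms by blast
  from LeastI_ex[OF this] show ?thesis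
    using that unfolding covering_number_def by blast
qed

lemma subset_doubleton_if_card_le_2:
  assumes "infinite (UNIV :: 'a set)" "finite T" "card T \<le> 2"
  obtains x y :: 'a where "x \<noteq> y" "T \<subseteq> {x, y}"
proof -
  obtain B where B: "finite B" "card B = 2 - card T" "B \<subseteq> UNIV - T"
    using infinite_arbitrarily_large[OF Diff_infinite_finite[OF assms(2,1)]] by blast
  then have "card (T \<union> B) = 2"
    using assms(2,3) by (subst card_Un_disjoint) auto
  then show ?thesis
    using that by (auto simp: card_2_iff)
qed

lemma two_point_cover_if_covering_number_le_2:
  assumes "finite N" "F \<subseteq> Pow N" "cross_intersecting F F" "covering_number F \<le> 2"
  obtains x y :: nat where "x \<noteq> y" "\<forall>A\<in>F. A \<inter> {x, y} \<noteq> {}"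
proof -
  have "\<forall>A\<in>F. N \<inter> A \<noteq> {}"
    using assms(2,3) by (fastforce simp: cross_intersecting_def)
  then obtain T where T: "finite T" "card T \<le> 2" "\<forall>A\<in>F. T \<inter> A \<noteq> {}"
    using assms(1,4) by (metis covering_number_attained)
  obtain x y :: nat where "x \<noteq> y" "T \<subseteq> {x, y}"
    by (rule subset_doubleton_if_card_le_2[OF infinite_UNIV_nat T(1,2)])
  with T(3) have "\<forall>A\<in>F. A \<inter> {x, y} \<noteq> {}"
    by blast
  with \<open>x \<noteq> y\<close> show ?thesis
    by (rule that)
qed

theorem theorem1p7:
  fixes n :: nat and F G :: "nat set set"
  assumes "n \<ge> 1"
    and "G \<subseteq> Pow {1..n}" and "F \<subseteq> G"
    and "down_set G" and "intersecting F"
    and "covering_number F \<le> 2"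
  shows "card F \<le> Max ((\<lambda>x. card {A\<in>G. x \<in> A}) ` {1..n})"
proof -
  have G: "down_closed G"
    using assms(4) by (simp add: down_set_def down_closed_def)
  have F: "cross_intersecting F F"
    using assms(5) by (simp add: intersecting_def cross_intersecting_def)
  have "F \<subseteq> Pow {1..n}"
    using assms(2,3) by blast
  then obtain x y where "x \<noteq> y" and cover: "\<forall>A\<in>F. A \<inter> {x, y} \<noteq> {}"
    by (rule two_point_cover_if_covering_number_le_2[OF finite_atLeastAtMost _ F assms(6)])
  define Y where "Y = {1..n} - {x, y}"
  have Y: "finite Y" "x \<notin> Y" "y \<notin> Y" "G \<subseteq> Pow (Y \<union> {x, y})"
    using assms(2) unfolding Y_def by auto
  have "card F \<le> card {A \<in> G. y \<in> A} \<or> card F \<le> card {A \<in> G. x \<in> A}"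
  proof (cases "card (slice G {x} Y) \<le> card (slice G {y} Y)")
    case True
    then show ?thesis
      using card_le_degree_if_two_point_cover[OF Y(1-3) \<open>x \<noteq> y\<close> Y(4) G assms(3) F cover]
      by blast
  next
    case False
    then show ?thesis
      using card_le_degree_if_two_point_cover[of Y y x G F] Y \<open>x \<noteq> y\<close> G assms(3) F cover
      by (auto simp: insert_commute)
  qed
  then show ?thesis
    using card_le_Max_degree[OF finite_atLeastAtMost assms(2)] by blast
qed

end
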